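(* Let $k\ge1$, let $\Gamma=\mathbb{Z}_2\,\mathrm{wr}\,\mathbb{Z}^k=\Sigma\rtimes_\alpha\mathbb{Z}^k$, let $\phi:\Gamma\to\Gamma$ be an automorphism, let $\phi'=\phi|_\Sigma$ and let $\overline{\phi}:\mathbb{Z}^k\to\mathbb{Z}^k$ be the automorphism induced on $\Gamma/\Sigma\cong\mathbb{Z}^k$. Let $x_0\in\mathbb{Z}^k$ be the element with $\phi'(\delta_0)=\delta_{x_0}$ (so that $\phi'(\delta_y)=\delta_{\overline{\phi}(y)+x_0}$ for all $y\in\mathbb{Z}^k$). If $\delta_{x_1}$ and $\delta_{x_2}$ ($x_1,x_2\in\mathbb{Z}^k$) belong to the same Reidemeister class of $\phi'$, then for some integer $t\ge0$ either $$\overline{\phi}^t(x_1)+\overline{\phi}^{t-1}(x_0)+\dots+\overline{\phi}(x_0)+x_0=x_2$$ or $$\overline{\phi}^t(x_2)+\overline{\phi}^{t-1}(x_0)+\dots+\overline{\phi}(x_0)+x_0=x_1$$ (for $t=0$ the sum of the $x_0$-terms is empty).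
   Context: $\mathbb{Z}_2\,\mathrm{wr}\,\mathbb{Z}^k$ is $\Sigma\rtimes_\alpha\mathbb{Z}^k$ with $\Sigma=\bigoplus_{x\in\mathbb{Z}^k}(\mathbb{Z}_2)_{(x)}$ (finitely supported), $\delta_x$ the nontrivial element of $(\mathbb{Z}_2)_{(x)}$, and $\alpha(y)(\delta_x)=\delta_{y+x}$. $\Sigma$ is characteristic (the torsion subgroup), so $\phi$ restricts to $\phi'$ on $\Sigma$ and induces $\overline\phi$ on the quotient $\mathbb{Z}^k$; $\phi'$ maps each $\delta_0$ to a single $\delta_{x_0}$. Reidemeister classes of an automorphism $\psi$ of a group $G$ are the classes of the relation $g\sim hg\psi(h^{-1})$. *)

theory Defs
  imports "HOL-Algebra.Group" "HOL-Analysis.Finite_Cartesian_Product"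
begin

text \<open>The lamplighter group Z_2 wr Z^k, realised concretely: an element (S, a) consists of
  a finite set S of lattice points (the element of Sigma = sum of delta_x for x in S, with
  symmetric difference as the group law) and a point a of Z^k.  Multiplication is the
  semidirect product law (S,a)(T,b) = (S + alpha(a)(T), a + b), where alpha(a) translates
  by a.  The dimension k is the cardinality of the finite index type 'n (so k >= 1).\<close>

definition lamplighter :: "((int ^ 'n::finite) set \<times> (int ^ 'n)) monoid" where
  "lamplighter =
     \<lparr> carrier = {p. finite (fst p)},
       mult = (\<lambda>p q. ((fst p - (\<lambda>x. snd p + x) ` fst q) \<union> ((\<lambda>x. snd p + x) ` fst q - fst p),
                        snd p + snd q)),
       one = ({}, 0) \<rparr>"

definition lamp_Sigma :: "((int ^ 'n::finite) set \<times> (int ^ 'n)) set" where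
  "lamp_Sigma = {(S, 0) | S. finite S}"

definition lamp_Sigma_grp :: "((int ^ 'n::finite) set \<times> (int ^ 'n)) monoid" where
  "lamp_Sigma_grp = lamplighter\<lparr>carrier := lamp_Sigma\<rparr>"

definition lamp_delta :: "int ^ 'n::finite \<Rightarrow> (int ^ 'n) set \<times> (int ^ 'n)" where
  "lamp_delta x = ({x}, 0)"

text \<open>The automorphism of Gamma / Sigma = Z^k induced by phi (quotient map = snd).\<close>
definition lamp_bar :: "((int ^ 'n::finite) set \<times> (int ^ 'n) \<Rightarrow> (int ^ 'n) set \<times> (int ^ 'n))
                         \<Rightarrow> int ^ 'n \<Rightarrow> int ^ 'n" where
  "lamp_bar \<phi> y = snd (\<phi> ({}, y))"

definition reidemeister_rel :: "('a, 'b) monoid_scheme \<Rightarrow> ('a \<Rightarrow> 'a) \<Rightarrow> 'a \<Rightarrow> 'a \<Rightarrow> bool" where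
  "reidemeister_rel G \<psi> g g' \<longleftrightarrow> g \<in> carrier G \<and> g' \<in> carrier G \<and>
     (\<exists>h\<in>carrier G. g' = h \<otimes>\<^bsub>G\<^esub> g \<otimes>\<^bsub>G\<^esub> \<psi> (inv\<^bsub>G\<^esub> h))"

end

theory Submission
  imports Defs
begin

(*
  Put f y = phibar y + x0. Then phi maps delta_y to delta_(f y), hence the element of Sigma
  supported on a finite set H to the one supported on f(H), and the Reidemeister relation
  delta_x2 = h delta_x1 phi(h)^-1 becomes sym_diff H (f ` H) = sym_diff {x1} {x2}.
  If x2 were not in the two-sided f-orbit of x1, intersecting H with that f-invariant
  orbit would give a finite set A whose symmetric difference with f(A) is {x1}; but
  |A| = |f(A)| forces that symmetric difference to have even cardinality.
  Finally f^t y = phibar^t y + phibar^(t-1) x0 + ... + x0 since phibar is additive.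
*)

lemma image_sym_diff_translate:
  fixes a :: "'a::group_add"
  shows "(\<lambda>x. a + x) ` sym_diff B C = sym_diff ((\<lambda>x. a + x) ` B) ((\<lambda>x. a + x) ` C)"
  by (simp add: image_Un image_set_diff inj_def)

definition two_sided_orbit :: "('a \<Rightarrow> 'a) \<Rightarrow> 'a \<Rightarrow> 'a set" where
  "two_sided_orbit f x = {z. \<exists>t. (f ^^ t) x = z \<or> (f ^^ t) z = x}"

lemma self_in_two_sided_orbit: "x \<in> two_sided_orbit f x"
  unfolding two_sided_orbit_def by (auto intro: exI[of _ 0])

lemma two_sided_orbit_step_iff:
  assumes "inj f"
  shows "f z \<in> two_sided_orbit f x \<longleftrightarrow> z \<in> two_sided_orbit f x"
proof
  assume "f z \<in> two_sided_orbit f x"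
  then obtain t where "(f ^^ t) x = f z \<or> (f ^^ Suc t) z = x"
    unfolding two_sided_orbit_def by (auto simp del: funpow.simps simp: funpow_Suc_right)
  then show "z \<in> two_sided_orbit f x"
  proof
    assume fz: "(f ^^ t) x = f z"
    show ?thesis
    proof (cases t)
      case 0
      then show ?thesis using fz unfolding two_sided_orbit_def by (auto intro: exI[of _ 1])
    next
      case (Suc s)
      then show ?thesis using fz assms unfolding two_sided_orbit_def by (auto simp: inj_eq)
    qed
  qed (unfold two_sided_orbit_def, blast)
next
  assume "z \<in> two_sided_orbit f x"
  then obtain t where "(f ^^ t) x = z \<or> (f ^^ t) z = x"
    unfolding two_sided_orbit_def by blast
  then show "f z \<in> two_sided_orbit f x"
  proof
    assume "(f ^^ t) x = z"
    then have "(f ^^ Suc t) x = f z" by simp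
    then show ?thesis unfolding two_sided_orbit_def by blast
  next
    assume zt: "(f ^^ t) z = x"
    show ?thesis
    proof (cases t)
      case 0
      then show ?thesis using zt unfolding two_sided_orbit_def by (auto intro: exI[of _ 1])
    next
      case (Suc s)
      then have "(f ^^ s) (f z) = x" using zt by (simp add: funpow_Suc_right del: funpow.simps)
      then show ?thesis unfolding two_sided_orbit_def by blast
    qed
  qed
qed

lemma even_card_sym_diff:
  assumes "finite A" "finite B" "card A = card B"
  shows "even (card (sym_diff A B))"
proof -
  have "card (sym_diff A B) = card (A - B) + card (B - A)"
    using assms by (intro card_Un_disjoint) auto
  also have "\<dots> = 2 * (card A - card (A \<inter> B))"
    using assms by (simp add: card_Diff_subset_Int Int_commute)
  finally show ?thesis by simp
qed

lemma sym_diff_image_eq_sym_diff_singletons: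
  assumes inj: "inj f" and fin: "finite H"
    and eq: "sym_diff H (f ` H) = sym_diff {x1} {x2}"
  shows "x2 \<in> two_sided_orbit f x1"
proof (rule ccontr)
  assume x2: "x2 \<notin> two_sided_orbit f x1"
  define A where "A = H \<inter> two_sided_orbit f x1"
  have "f ` A = f ` H \<inter> two_sided_orbit f x1"
    unfolding A_def using two_sided_orbit_step_iff[OF inj] by blast
  then have "sym_diff A (f ` A) = sym_diff H (f ` H) \<inter> two_sided_orbit f x1"
    unfolding A_def by blast
  also have "\<dots> = {x1}"
    using eq x2 self_in_two_sided_orbit[of x1 f] by auto
  finally have "sym_diff A (f ` A) = {x1}" .
  moreover have "even (card (sym_diff A (f ` A)))"
    using fin inj unfolding A_def by (intro even_card_sym_diff) (auto simp: card_image inj_on_subset)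
  ultimately show False by simp
qed

lemma funpow_add_const:
  fixes g :: "'a::ab_group_add \<Rightarrow> 'a"
  assumes "additive g"
  shows "((\<lambda>y. g y + c) ^^ t) x = (g ^^ t) x + (\<Sum>i<t. (g ^^ i) c)"
proof (induction t)
  case (Suc t)
  have "((\<lambda>y. g y + c) ^^ Suc t) x = g ((g ^^ t) x + (\<Sum>i<t. (g ^^ i) c)) + c"
    by (simp add: Suc.IH)
  also have "\<dots> = (g ^^ Suc t) x + (\<Sum>i<t. (g ^^ Suc i) c) + c"
    by (simp add: additive.add[OF assms] additive.sum[OF assms])
  also have "\<dots> = (g ^^ Suc t) x + (\<Sum>i<Suc t. (g ^^ i) c)"
    by (simp add: sum.lessThan_Suc_shift del: sum.lessThan_Suc)
  finally show ?case .
qed simp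

lemma lamplighter_mult [simp]:
  "(A, a) \<otimes>\<^bsub>lamplighter\<^esub> (B, b) = (sym_diff A ((\<lambda>x. a + x) ` B), a + b)"
  by (simp add: lamplighter_def)

lemma snd_lamplighter_mult: "snd (p \<otimes>\<^bsub>lamplighter\<^esub> q) = snd p + snd q"
  by (simp add: lamplighter_def)

lemma lamplighter_one [simp]: "\<one>\<^bsub>lamplighter\<^esub> = ({}, 0)"
  by (simp add: lamplighter_def)

lemma lamplighter_carrier [simp]: "(A, a) \<in> carrier lamplighter \<longleftrightarrow> finite A"
  by (simp add: lamplighter_def)

lemma lamp_delta_in_carrier [simp]: "lamp_delta x \<in> carrier lamplighter"
  by (simp add: lamp_delta_def)

lemma group_lamplighter: "group lamplighter"
proof (rule groupI)
  fix p q r :: "(int ^ 'n::finite) set \<times> (int ^ 'n)"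
  show "p \<otimes>\<^bsub>lamplighter\<^esub> q \<otimes>\<^bsub>lamplighter\<^esub> r = p \<otimes>\<^bsub>lamplighter\<^esub> (q \<otimes>\<^bsub>lamplighter\<^esub> r)"
    by (cases p, cases q, cases r) (auto simp: image_sym_diff_translate image_image add.assoc)
  assume "p \<in> carrier lamplighter"
  then show "\<exists>q \<in> carrier lamplighter. q \<otimes>\<^bsub>lamplighter\<^esub> p = \<one>\<^bsub>lamplighter\<^esub>"
    by (cases p) (auto intro!: bexI[of _ "((\<lambda>x. - snd p + x) ` fst p, - snd p)"] simp: image_image)
qed (auto simp: lamplighter_def)

lemma lamplighter_inv:
  assumes "finite A"
  shows "inv\<^bsub>lamplighter\<^esub> (A, a) = ((\<lambda>x. - a + x) ` A, - a)"
  using assms by (intro group.inv_equality[OF group_lamplighter]) (auto simp: image_image)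

lemma subgroup_lamp_Sigma: "subgroup lamp_Sigma lamplighter"
  by (rule group.subgroupI[OF group_lamplighter]) (auto simp: lamp_Sigma_def lamplighter_inv)

lemma lamplighter_conj_delta:
  assumes "finite A"
  shows "(A, b) \<otimes>\<^bsub>lamplighter\<^esub> lamp_delta x \<otimes>\<^bsub>lamplighter\<^esub> inv\<^bsub>lamplighter\<^esub> (A, b)
           = lamp_delta (b + x)"
  using assms by (auto simp: lamplighter_inv lamp_delta_def image_image)

locale lamplighter_aut =
  fixes \<phi> :: "(int ^ 'n::finite) set \<times> (int ^ 'n) \<Rightarrow> (int ^ 'n) set \<times> (int ^ 'n)"
    and x0 :: "int ^ 'n"
  assumes aut: "\<phi> \<in> iso lamplighter lamplighter"
    and delta_0: "\<phi> (lamp_delta 0) = lamp_delta x0"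
begin

sublocale group_hom lamplighter lamplighter \<phi>
  using aut by (simp add: group_hom_def group_hom_axioms_def group_lamplighter iso_def)

lemma inj_on_carrier: "inj_on \<phi> (carrier lamplighter)"
  using aut by (simp add: iso_def bij_betw_def)

lemma lamp_bar_add: "lamp_bar \<phi> (y + z) = lamp_bar \<phi> y + lamp_bar \<phi> z"
proof -
  have "\<phi> ({}, y + z) = \<phi> ({}, y) \<otimes>\<^bsub>lamplighter\<^esub> \<phi> ({}, z)"
    by (simp flip: hom_mult)
  then show ?thesis unfolding lamp_bar_def by (simp add: snd_lamplighter_mult)
qed

sublocale bar: additive "lamp_bar \<phi>"
  by unfold_locales (rule lamp_bar_add)

lemma inj_lamp_bar: "inj (lamp_bar \<phi>)"
proof -
  \<comment> \<open>if \<phi>({},y) lay in Sigma it would square to the identity, but ({},y) has infinite order\<close>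
  have "y = 0" if y0: "lamp_bar \<phi> y = 0" for y
  proof -
    obtain A where A: "\<phi> ({}, y) = (A, 0)"
      using y0 unfolding lamp_bar_def by (metis prod.collapse)
    have "\<phi> ({}, y + y) = \<phi> ({}, y) \<otimes>\<^bsub>lamplighter\<^esub> \<phi> ({}, y)"
      by (simp flip: hom_mult)
    also have "\<dots> = \<phi> ({}, 0)"
      using A hom_one by simp
    finally have "({}, y + y) = (({}, 0) :: (int ^ 'n) set \<times> (int ^ 'n))"
      using inj_on_carrier by (simp add: inj_on_eq_iff)
    then show "y = 0" by (simp add: vec_eq_iff)
  qed
  then show ?thesis
    by (intro injI) (metis bar.diff eq_iff_diff_eq_0)
qed

lemma image_lamp_delta: "\<phi> (lamp_delta y) = lamp_delta (lamp_bar \<phi> y + x0)"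
proof -
  obtain A b where Ab: "\<phi> ({}, y) = (A, b)"
    by fastforce
  have "finite A"
    using hom_closed[of "({}, y)"] Ab by simp
  have delta_conj: "lamp_delta y
      = ({}, y) \<otimes>\<^bsub>lamplighter\<^esub> lamp_delta 0 \<otimes>\<^bsub>lamplighter\<^esub> inv\<^bsub>lamplighter\<^esub> ({}, y)"
    using lamplighter_conj_delta[of "{}" y 0] by simp
  have "\<phi> (p \<otimes>\<^bsub>lamplighter\<^esub> lamp_delta 0 \<otimes>\<^bsub>lamplighter\<^esub> inv\<^bsub>lamplighter\<^esub> p)
      = \<phi> p \<otimes>\<^bsub>lamplighter\<^esub> \<phi> (lamp_delta 0) \<otimes>\<^bsub>lamplighter\<^esub> inv\<^bsub>lamplighter\<^esub> \<phi> p"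
    if "p \<in> carrier lamplighter" for p
    using that by simp
  then have "\<phi> (lamp_delta y)
      = \<phi> ({}, y) \<otimes>\<^bsub>lamplighter\<^esub> \<phi> (lamp_delta 0) \<otimes>\<^bsub>lamplighter\<^esub> inv\<^bsub>lamplighter\<^esub> \<phi> ({}, y)"
    by (simp only: delta_conj) simp
  also have "\<dots> = lamp_delta (b + x0)"
    using Ab \<open>finite A\<close> by (simp only: delta_0 lamplighter_conj_delta)
  finally show ?thesis
    using Ab by (simp add: lamp_bar_def)
qed

lemma image_Sigma:
  assumes "finite H"
  shows "\<phi> (H, 0) = ((\<lambda>y. lamp_bar \<phi> y + x0) ` H, 0)"
  using assms
proof (induction H rule: finite_induct)
  case empty
  then show ?case using hom_one by simp
next
  case (insert y H)
  have "(insert y H, 0) = lamp_delta y \<otimes>\<^bsub>lamplighter\<^esub> (H, 0)"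
    using insert by (auto simp: lamp_delta_def)
  then have "\<phi> (insert y H, 0) = \<phi> (lamp_delta y) \<otimes>\<^bsub>lamplighter\<^esub> \<phi> (H, 0)"
    using insert.hyps by simp
  also have "\<dots> = (sym_diff {lamp_bar \<phi> y + x0} ((\<lambda>y. lamp_bar \<phi> y + x0) ` H), 0)"
    by (simp add: image_lamp_delta insert.IH) (simp add: lamp_delta_def)
  finally show ?case
    using insert inj_lamp_bar by (auto simp: inj_eq)
qed

lemma reidemeister_delta_sym_diff:
  assumes "reidemeister_rel lamp_Sigma_grp (restrict \<phi> lamp_Sigma) (lamp_delta x1) (lamp_delta x2)"
  obtains H where "finite H" "sym_diff H ((\<lambda>y. lamp_bar \<phi> y + x0) ` H) = sym_diff {x1} {x2}"
proof -
  obtain h where h: "h \<in> lamp_Sigma" and eq: "lamp_delta x2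
      = h \<otimes>\<^bsub>lamplighter\<^esub> lamp_delta x1 \<otimes>\<^bsub>lamplighter\<^esub> restrict \<phi> lamp_Sigma (inv\<^bsub>lamp_Sigma_grp\<^esub> h)"
    using assms unfolding reidemeister_rel_def by (auto simp: lamp_Sigma_grp_def)
  obtain H where hH: "h = (H, 0)" and "finite H"
    using h by (auto simp: lamp_Sigma_def)
  have "inv\<^bsub>lamp_Sigma_grp\<^esub> h = h"
    using h \<open>finite H\<close> unfolding lamp_Sigma_grp_def hH
    by (simp add: group.m_inv_consistent[OF group_lamplighter subgroup_lamp_Sigma] lamplighter_inv)
  then have "({x2}, 0) = (sym_diff (sym_diff H {x1}) ((\<lambda>y. lamp_bar \<phi> y + x0) ` H), 0)"
    using eq h hH \<open>finite H\<close> by (simp add: image_Sigma lamp_delta_def)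
  then have "sym_diff H ((\<lambda>y. lamp_bar \<phi> y + x0) ` H) = sym_diff {x1} {x2}"
    by auto
  with \<open>finite H\<close> show ?thesis by (rule that)
qed

end

theorem lemma2p2:
  fixes \<phi> :: "(int ^ 'n::finite) set \<times> (int ^ 'n) \<Rightarrow> (int ^ 'n) set \<times> (int ^ 'n)"
    and x0 x1 x2 :: "int ^ 'n"
  assumes aut: "\<phi> \<in> iso lamplighter lamplighter"
    and x0: "\<phi> (lamp_delta 0) = lamp_delta x0"
    and reid: "reidemeister_rel lamp_Sigma_grp (restrict \<phi> lamp_Sigma) (lamp_delta x1) (lamp_delta x2)"
  shows "\<exists>t::nat. ((lamp_bar \<phi> ^^ t) x1 + (\<Sum>i<t. (lamp_bar \<phi> ^^ i) x0) = x2)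
              \<or> ((lamp_bar \<phi> ^^ t) x2 + (\<Sum>i<t. (lamp_bar \<phi> ^^ i) x0) = x1)"
proof -
  interpret lamplighter_aut \<phi> x0
    using aut x0 by unfold_locales
  let ?f = "\<lambda>y. lamp_bar \<phi> y + x0"
  obtain H where "finite H" "sym_diff H (?f ` H) = sym_diff {x1} {x2}"
    using reid by (rule reidemeister_delta_sym_diff)
  moreover have "inj ?f"
    using inj_lamp_bar by (simp add: inj_def)
  ultimately have "x2 \<in> two_sided_orbit ?f x1"
    by (intro sym_diff_image_eq_sym_diff_singletons)
  then obtain t where "(?f ^^ t) x1 = x2 \<or> (?f ^^ t) x2 = x1"
    unfolding two_sided_orbit_def by blast
  then show ?thesis
    unfolding funpow_add_const[OF bar.additive_axioms] by blast
qed

end
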